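(* Let $\mathbf X\in\mathbb R^{n\times d}$ have full column rank, $1\le k<d$, $\mathbf y\in\mathbb R^n$ and $\lambda>0$. Let $f_\lambda(\mathbf y;\boldsymbol\beta)=\frac1{2n}\|\mathbf y-\mathbf X\boldsymbol\beta\|_2^2+\lambda(\|\boldsymbol\beta_{1:k}\|_2+\|\boldsymbol\beta_{-1:k}\|_1)$ and $\hat{\boldsymbol\beta}^\lambda=\arg\min_{\boldsymbol\beta\in\mathbb R^d}f_\lambda(\mathbf y;\boldsymbol\beta)$. For $\mathbf b\in\mathbb R^k$ let $\hat{\boldsymbol\beta}^\lambda_{-1:k}(\mathbf b)=\arg\min_{\boldsymbol\gamma\in\mathbb R^{d-k}}\big(\frac1{2n}\|\mathbf y-\mathbf X_{1:k}\mathbf b-\mathbf X_{-1:k}\boldsymbol\gamma\|_2^2+\lambda\|\boldsymbol\gamma\|_1\big)$ and let $\hat{\boldsymbol\beta}^\lambda_*(\mathbf b)\in\mathbb R^d$ be the vector whose first $k$ coordinates are $\mathbf b$ and whose remaining coordinates are $\hat{\boldsymbol\beta}^\lambda_{-1:k}(\mathbf b)$. Then for every $\mathbf b\in\mathbb R^k$ the following are equivalent: (1) $\mathbf 0\in\partial_{\boldsymbol\beta_{1:k}}f_\lambda(\mathbf y;\boldsymbol\beta)\big|_{\boldsymbol\beta=\hat{\boldsymbol\beta}^\lambda_*(\mathbf b)}$; (2) $\hat{\boldsymbol\beta}^\lambda=\hat{\boldsymbol\beta}^\lambda_*(\mathbf b)$; (3) $\hat{\boldsymbol\beta}^\lambda_{1:k}=\mathbf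 b$.
   Context: $\mathbf X_{1:k}$ is the first $k$ columns of $\mathbf X$, $\mathbf X_{-1:k}$ the rest; $\boldsymbol\beta_{1:k}$ and $\boldsymbol\beta_{-1:k}$ analogously. $\partial_{\boldsymbol\beta_{1:k}}$ denotes the subdifferential of the (convex) function $\boldsymbol\beta_{1:k}\mapsto f_\lambda(\mathbf y;\boldsymbol\beta)$ with the remaining coordinates held fixed. Both minimizers are unique since $\mathbf X$ and $\mathbf X_{-1:k}$ have full column rank. *)

theory Defs
  imports "HOL-Analysis.Analysis"
begin

text \<open>Coordinates of beta in R^d are indexed by the sum type 'k + 'm:
  Inl a are the first k coordinates (beta_{1:k}), Inr c the remaining d-k
  coordinates (beta_{-1:k}).  Here d = CARD('k) + CARD('m).\<close>

definition head :: "real ^ ('k::finite + 'm::finite) \<Rightarrow> real ^ 'k" where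
  "head \<beta> = (\<chi> a. \<beta> $ Inl a)"

definition tail :: "real ^ ('k::finite + 'm::finite) \<Rightarrow> real ^ 'm" where
  "tail \<beta> = (\<chi> c. \<beta> $ Inr c)"

definition join :: "real ^ 'k::finite \<Rightarrow> real ^ 'm::finite \<Rightarrow> real ^ ('k + 'm)" where
  "join b g = (\<chi> i. case i of Inl a \<Rightarrow> b $ a | Inr c \<Rightarrow> g $ c)"

definition Xhead :: "real ^ ('k::finite + 'm::finite) ^ 'n::finite \<Rightarrow> real ^ 'k ^ 'n" where
  "Xhead X = (\<chi> r a. X $ r $ Inl a)"

definition Xtail :: "real ^ ('k::finite + 'm::finite) ^ 'n::finite \<Rightarrow> real ^ 'm ^ 'n" where
  "Xtail X = (\<chi> r c. X $ r $ Inr c)"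

definition l1norm :: "real ^ 'm::finite \<Rightarrow> real" where
  "l1norm g = (\<Sum>c\<in>UNIV. \<bar>g $ c\<bar>)"

definition f_obj :: "real \<Rightarrow> real ^ ('k::finite + 'm::finite) ^ 'n::finite \<Rightarrow> real ^ 'n
    \<Rightarrow> real ^ ('k + 'm) \<Rightarrow> real" where
  "f_obj lam X y \<beta> = 1 / (2 * real CARD('n)) * (norm (y - X *v \<beta>))\<^sup>2
      + lam * (norm (head \<beta>) + l1norm (tail \<beta>))"

definition beta_hat :: "real \<Rightarrow> real ^ ('k::finite + 'm::finite) ^ 'n::finite \<Rightarrow> real ^ 'n
    \<Rightarrow> real ^ ('k + 'm)" where
  "beta_hat lam X y = (THE \<beta>. \<forall>\<beta>'. f_obj lam X y \<beta> \<le> f_obj lam X y \<beta>')"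

definition g_obj :: "real \<Rightarrow> real ^ ('k::finite + 'm::finite) ^ 'n::finite \<Rightarrow> real ^ 'n
    \<Rightarrow> real ^ 'k \<Rightarrow> real ^ 'm \<Rightarrow> real" where
  "g_obj lam X y b \<gamma> = 1 / (2 * real CARD('n)) * (norm (y - Xhead X *v b - Xtail X *v \<gamma>))\<^sup>2
      + lam * l1norm \<gamma>"

definition gamma_hat :: "real \<Rightarrow> real ^ ('k::finite + 'm::finite) ^ 'n::finite \<Rightarrow> real ^ 'n
    \<Rightarrow> real ^ 'k \<Rightarrow> real ^ 'm" where
  "gamma_hat lam X y b = (THE \<gamma>. \<forall>\<gamma>'. g_obj lam X y b \<gamma> \<le> g_obj lam X y b \<gamma>')"

definition beta_star :: "real \<Rightarrow> real ^ ('k::finite + 'm::finite) ^ 'n::finite \<Rightarrow> real ^ 'n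
    \<Rightarrow> real ^ 'k \<Rightarrow> real ^ ('k + 'm)" where
  "beta_star lam X y b = join b (gamma_hat lam X y b)"

definition subdiff :: "('a::real_inner \<Rightarrow> real) \<Rightarrow> 'a \<Rightarrow> 'a set" where
  "subdiff h x = {s. \<forall>z. h z \<ge> h x + s \<bullet> (z - x)}"

end

theory Submission
  imports Defs
begin

text \<open>Write f(b, \<gamma>) for the objective at join b \<gamma>.  Since f(b, \<gamma>) = g_b(\<gamma>) + \<lambda> |b|, the
  minimizer of f has tail \<gamma>_hat(b) exactly when its head is b, which gives (2) \<longleftrightarrow> (3); both argmins
  exist and are unique because injectivity of X makes the quadratic terms coercive and strictly
  convex.  Condition (1) says that beta_star(b) minimizes f in the head block, and by construction
  it minimizes f in the tail block.  For a least-squares term plus a penalty that is convex and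
  separates over the blocks, blockwise minimality already implies global minimality: in each
  block it yields the subgradient inequality of that block's penalty against the gradient of the
  quadratic term, and the two inequalities add up to the global one.\<close>

lemma norm_diff_power2:
  fixes x y :: "'a::real_inner"
  shows "(norm (x - y))\<^sup>2 = (norm x)\<^sup>2 - 2 * (x \<bullet> y) + (norm y)\<^sup>2"
  by (simp add: power2_norm_eq_inner inner_diff_left inner_diff_right inner_commute)

lemma norm_midpoint_power2:
  fixes p q :: "'a::real_inner"
  shows "(norm ((1/2) *\<^sub>R p + (1/2) *\<^sub>R q))\<^sup>2
           = ((norm p)\<^sup>2 + (norm q)\<^sup>2) / 2 - (norm (p - q))\<^sup>2 / 4"
  by (simp add: power2_norm_eq_inner inner_add_left inner_add_right inner_diff_left
      inner_diff_right inner_commute field_simps)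

lemma convex_on_subadditive_homogeneous:
  fixes p :: "'a::real_vector \<Rightarrow> real"
  assumes add: "\<And>x y. p (x + y) \<le> p x + p y"
    and scale: "\<And>t x. p (t *\<^sub>R x) = \<bar>t\<bar> * p x"
  shows "convex_on UNIV p"
proof
  fix t :: real and x y :: 'a
  assume "0 < t" "t < 1"
  then show "p ((1 - t) *\<^sub>R x + t *\<^sub>R y) \<le> (1 - t) * p x + t * p y"
    using add[of "(1 - t) *\<^sub>R x" "t *\<^sub>R y"] by (simp add: scale)
qed simp

lemma convex_on_norm: "convex_on UNIV norm"
  by (rule convex_on_subadditive_homogeneous) (simp_all add: norm_triangle_ineq)

subsection \<open>Penalized least squares\<close>

lemma penalized_least_squares_min_exists:
  fixes A :: "'a::euclidean_space \<Rightarrow> 'b::euclidean_space"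
  assumes "linear A" "inj A" "c > 0" "convex_on UNIV h" "\<And>v. 0 \<le> h v"
  shows "\<exists>v. \<forall>v'. c * (norm (r - A v))\<^sup>2 + h v \<le> c * (norm (r - A v'))\<^sup>2 + h v'"
proof -
  define F where "F v = c * (norm (r - A v))\<^sup>2 + h v" for v
  have "continuous_on UNIV h"
    using assms(4) by (simp add: convex_on_continuous)
  moreover have "continuous_on UNIV A"
    using assms(1) by (simp add: linear_conv_bounded_linear linear_continuous_on)
  ultimately have F_cont: "continuous_on UNIV F"
    unfolding F_def by (intro continuous_intros) auto
  obtain B where "B > 0" and B: "\<And>v. B * norm v \<le> norm (A v)"
    using linear_inj_bounded_below_pos[OF assms(1,2)] by blast
  define S where "S = {v. F v \<le> F 0}"
  have "bounded S"
  proof -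
    have "norm v \<le> (norm r + sqrt (F 0 / c)) / B" if "v \<in> S" for v
    proof -
      have "c * (norm (r - A v))\<^sup>2 \<le> F 0"
        using that assms(5)[of v] by (simp add: S_def F_def)
      then have "norm (r - A v) \<le> sqrt (F 0 / c)"
        using assms(3) by (intro real_le_rsqrt) (simp add: field_simps)
      moreover have "norm (A v) \<le> norm r + norm (r - A v)"
        using norm_triangle_ineq4[of r "r - A v"] by simp
      ultimately show ?thesis
        using B[of v] \<open>B > 0\<close> by (simp add: field_simps)
    qed
    then show ?thesis unfolding bounded_iff by blast
  qed
  moreover have "closed S"
    unfolding S_def by (intro closed_Collect_le F_cont continuous_on_const)
  ultimately have "compact S" by (simp add: compact_eq_bounded_closed)
  moreover have "S \<noteq> {}" unfolding S_def by auto
  ultimately obtain v where "v \<in> S" "\<And>z. z \<in> S \<Longrightarrow> F v \<le> F z"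
    using continuous_attains_inf[of S F] continuous_on_subset[OF F_cont] by blast
  then have "F v \<le> F v'" for v'
    by (cases "v' \<in> S") (fastforce simp: S_def)+
  then show ?thesis unfolding F_def by blast
qed

text \<open>By the parallelogram law the quadratic term is strictly convex, as A is injective.\<close>
lemma penalized_least_squares_min_unique:
  fixes A :: "'a::real_vector \<Rightarrow> 'b::real_inner"
  assumes "linear A" "inj A" "c > 0" "convex_on UNIV h"
    and u: "\<And>v'. c * (norm (r - A u))\<^sup>2 + h u \<le> c * (norm (r - A v'))\<^sup>2 + h v'"
    and v: "\<And>v'. c * (norm (r - A v))\<^sup>2 + h v \<le> c * (norm (r - A v'))\<^sup>2 + h v'"
  shows "u = v"
proof -
  define m where "m = (1/2) *\<^sub>R u + (1/2) *\<^sub>R v"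
  have "(1/2) *\<^sub>R (r - A u) + (1/2) *\<^sub>R (r - A v)
      = ((1/2) + (1/2)) *\<^sub>R r - ((1/2) *\<^sub>R A u + (1/2) *\<^sub>R A v)"
    by (simp only: scaleR_diff_right scaleR_add_left) (simp add: algebra_simps)
  then have mid: "r - A m = (1/2) *\<^sub>R (r - A u) + (1/2) *\<^sub>R (r - A v)"
    using assms(1) by (simp add: m_def linear_add linear_scale)
  have "(r - A u) - (r - A v) = A (v - u)"
    using assms(1) by (simp add: linear_diff)
  with mid have quad: "(norm (r - A m))\<^sup>2
      = ((norm (r - A u))\<^sup>2 + (norm (r - A v))\<^sup>2) / 2 - (norm (A (v - u)))\<^sup>2 / 4"
    by (simp only: norm_midpoint_power2)
  have "h m \<le> (h u + h v) / 2"
    using convex_onD[OF assms(4), of "1/2" u v] by (simp add: m_def)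
  moreover have "c * (norm (r - A m))\<^sup>2 = (c * (norm (r - A u))\<^sup>2 + c * (norm (r - A v))\<^sup>2) / 2
      - c * (norm (A (v - u)))\<^sup>2 / 4"
    unfolding quad by (simp add: field_simps)
  ultimately have "c * (norm (A (v - u)))\<^sup>2 \<le> 0"
    using u[of m] v[of m] by argo
  then have "A (v - u) = A 0"
    using assms(1,3) by (simp add: mult_le_0_iff linear_0)
  then show ?thesis using assms(2) by (simp add: inj_eq)
qed

lemma penalized_least_squares_min_ex1:
  fixes A :: "'a::euclidean_space \<Rightarrow> 'b::euclidean_space"
  assumes "linear A" "inj A" "c > 0" "convex_on UNIV h" "\<And>v. 0 \<le> h v"
  shows "\<exists>!v. \<forall>v'. c * (norm (r - A v))\<^sup>2 + h v \<le> c * (norm (r - A v'))\<^sup>2 + h v'"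
  using penalized_least_squares_min_exists[OF assms]
    penalized_least_squares_min_unique[OF assms(1-4)] by blast

text \<open>Compare u0 with the points of the segment towards u, bound the penalty there by convexity,
  and let the step length tend to 0.\<close>
lemma penalized_least_squares_min_imp_subgradient:
  fixes L :: "'a::real_vector \<Rightarrow> 'b::real_inner"
  assumes "linear L" "convex_on UNIV h"
    and min: "\<And>u'. c * (norm (r - L u0))\<^sup>2 + h u0 \<le> c * (norm (r - L u'))\<^sup>2 + h u'"
  shows "2 * c * ((r - L u0) \<bullet> L (u - u0)) \<le> h u - h u0"
proof -
  define e where "e = r - L u0"
  define a where "a = L (u - u0)"
  have "2 * c * (e \<bullet> a) - t * (c * (norm a)\<^sup>2) \<le> h u - h u0" if "0 < t" "t < 1" for t
  proof -
    have step: "r - L (u0 + t *\<^sub>R (u - u0)) = e - t *\<^sub>R a"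
      using assms(1) by (simp add: e_def a_def linear_add linear_scale)
    have "(norm (r - L (u0 + t *\<^sub>R (u - u0))))\<^sup>2
        = (norm e)\<^sup>2 - 2 * t * (e \<bullet> a) + t\<^sup>2 * (norm a)\<^sup>2"
      unfolding step norm_diff_power2 by (simp add: power_mult_distrib)
    then have "c * (norm e)\<^sup>2 + h u0
        \<le> c * ((norm e)\<^sup>2 - 2 * t * (e \<bullet> a) + t\<^sup>2 * (norm a)\<^sup>2) + h (u0 + t *\<^sub>R (u - u0))"
      using min[of "u0 + t *\<^sub>R (u - u0)"] by (simp add: e_def)
    moreover have "h (u0 + t *\<^sub>R (u - u0)) \<le> (1 - t) * h u0 + t * h u"
      using convex_onD[OF assms(2), of t u0 u] that by (simp add: algebra_simps)
    ultimately have "t * (2 * c * (e \<bullet> a) - t * (c * (norm a)\<^sup>2)) \<le> t * (h u - h u0)"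
      by (simp add: algebra_simps power2_eq_square)
    then show ?thesis using \<open>0 < t\<close> by simp
  qed
  then have "eventually (\<lambda>t. 2 * c * (e \<bullet> a) - t * (c * (norm a)\<^sup>2) \<le> h u - h u0) (at_right 0)"
    unfolding eventually_at_right_field by (intro exI[of _ 1]) auto
  moreover have "((\<lambda>t. 2 * c * (e \<bullet> a) - t * (c * (norm a)\<^sup>2)) \<longlongrightarrow> 2 * c * (e \<bullet> a)) (at_right 0)"
    by (auto intro!: tendsto_eq_intros)
  ultimately show ?thesis
    unfolding e_def a_def by (intro tendsto_upperbound) auto
qed

lemma penalized_least_squares_blockwise_min_imp_min:
  fixes A :: "'a::real_vector \<Rightarrow> 'c::real_inner" and B :: "'b::real_vector \<Rightarrow> 'c"
    and r :: 'c and c :: real and g :: "'a \<Rightarrow> real" and h :: "'b \<Rightarrow> real"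
  assumes "linear A" "linear B" "c \<ge> 0" "convex_on UNIV g" "convex_on UNIV h"
  defines "F \<equiv> \<lambda>u w. c * (norm (r - A u - B w))\<^sup>2 + g u + h w"
  assumes min1: "\<And>u'. F u0 w0 \<le> F u' w0" and min2: "\<And>w'. F u0 w0 \<le> F u0 w'"
  shows "F u0 w0 \<le> F u w"
proof -
  define e where "e = r - A u0 - B w0"
  define a where "a = A (u - u0)"
  define b where "b = B (w - w0)"
  have residual: "r - A u - B w = e - (a + b)"
    using assms(1,2) by (simp add: e_def a_def b_def linear_diff)
  have "2 * c * (e \<bullet> a) \<le> g u - g u0"
  proof -
    have "2 * c * ((r - B w0 - A u0) \<bullet> A (u - u0)) \<le> g u - g u0"
      using min1 by (intro penalized_least_squares_min_imp_subgradient[OF assms(1,4)])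
        (simp add: F_def algebra_simps)
    then show ?thesis by (simp add: e_def a_def algebra_simps)
  qed
  moreover have "2 * c * (e \<bullet> b) \<le> h w - h w0"
  proof -
    have "2 * c * ((r - A u0 - B w0) \<bullet> B (w - w0)) \<le> h w - h w0"
      using min2 by (intro penalized_least_squares_min_imp_subgradient[OF assms(2,5)])
        (simp add: F_def algebra_simps)
    then show ?thesis by (simp add: e_def b_def)
  qed
  moreover have "F u w = c * ((norm e)\<^sup>2 - 2 * (e \<bullet> a) - 2 * (e \<bullet> b) + (norm (a + b))\<^sup>2) + g u + h w"
    unfolding F_def residual by (simp add: norm_diff_power2 inner_add_right)
  moreover have "F u0 w0 = c * (norm e)\<^sup>2 + g u0 + h w0"
    by (simp add: F_def e_def)
  moreover have "0 \<le> c * (norm (a + b))\<^sup>2"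
    using assms(3) by simp
  ultimately show ?thesis by (simp add: algebra_simps)
qed

subsection \<open>Block decomposition of the objective\<close>

lemma head_join [simp]: "head (join b g) = b"
  by (simp add: head_def join_def)

lemma tail_join [simp]: "tail (join b g) = g"
  by (simp add: tail_def join_def)

lemma join_head_tail [simp]: "join (head \<beta>) (tail \<beta>) = \<beta>"
  by (simp add: head_def tail_def join_def vec_eq_iff split: sum.split)

lemma linear_head: "linear head"
  by (simp add: linear_iff head_def vec_eq_iff)

lemma linear_tail: "linear tail"
  by (simp add: linear_iff tail_def vec_eq_iff)

lemma matrix_vector_mult_join: "X *v join b g = Xhead X *v b + Xtail X *v g"
proof -
  have "(\<Sum>i\<in>UNIV. X $ r $ i * join b g $ i)
      = (\<Sum>a\<in>UNIV. X $ r $ Inl a * b $ a) + (\<Sum>c\<in>UNIV. X $ r $ Inr c * g $ c)" for r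
    by (simp add: UNIV_Plus_UNIV[symmetric] sum.Plus del: UNIV_Plus_UNIV) (simp add: join_def)
  then show ?thesis
    by (simp add: matrix_vector_mult_def Xhead_def Xtail_def vec_eq_iff)
qed

lemma inj_Xtail: "inj ((*v) X) \<Longrightarrow> inj ((*v) (Xtail X))"
  by (simp add: inj_def matrix_vector_mult_join[of X 0, simplified, symmetric])
    (metis tail_join)

lemma l1norm_nonneg: "0 \<le> l1norm g"
  by (simp add: l1norm_def sum_nonneg)

lemma l1norm_triangle: "l1norm (g + g') \<le> l1norm g + l1norm g'"
  unfolding l1norm_def by (simp add: sum.distrib[symmetric] sum_mono abs_triangle_ineq)

lemma l1norm_scaleR: "l1norm (t *\<^sub>R g) = \<bar>t\<bar> * l1norm g"
  by (simp add: l1norm_def abs_mult sum_distrib_left)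

lemma convex_on_l1norm: "convex_on UNIV l1norm"
  by (rule convex_on_subadditive_homogeneous) (simp_all add: l1norm_triangle l1norm_scaleR)

lemma f_obj_join:
  "f_obj lam X y (join b g) = 1 / (2 * real CARD('n)) * (norm (y - Xhead X *v b - Xtail X *v g))\<^sup>2
     + lam * norm b + lam * l1norm g"
  for X :: "real ^ ('k::finite + 'm::finite) ^ 'n::finite"
  by (simp add: f_obj_def matrix_vector_mult_join algebra_simps)

lemma f_obj_join_eq_g_obj: "f_obj lam X y (join b g) = g_obj lam X y b g + lam * norm b"
  by (simp add: f_obj_join g_obj_def)

lemma f_obj_min_ex1:
  assumes "inj ((*v) X)" "lam > 0"
  shows "\<exists>!\<beta>. \<forall>\<beta>'. f_obj lam X y \<beta> \<le> f_obj lam X y \<beta>'"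
proof -
  have "convex_on UNIV (\<lambda>\<beta>. norm (head \<beta>) + l1norm (tail \<beta>))"
  proof (rule convex_on_subadditive_homogeneous)
    show "norm (head (\<beta> + \<beta>')) + l1norm (tail (\<beta> + \<beta>'))
        \<le> norm (head \<beta>) + l1norm (tail \<beta>) + (norm (head \<beta>') + l1norm (tail \<beta>'))" for \<beta> \<beta>'
      using norm_triangle_ineq[of "head \<beta>" "head \<beta>'"] l1norm_triangle[of "tail \<beta>" "tail \<beta>'"]
      by (simp add: linear_add[OF linear_head] linear_add[OF linear_tail])
  qed (simp add: linear_scale[OF linear_head] linear_scale[OF linear_tail] l1norm_scaleR algebra_simps)
  then show ?thesis
    unfolding f_obj_def using assms
    by (intro penalized_least_squares_min_ex1) (auto simp: l1norm_nonneg)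
qed

lemma g_obj_min_ex1:
  assumes "inj ((*v) X)" "lam > 0"
  shows "\<exists>!\<gamma>. \<forall>\<gamma>'. g_obj lam X y b \<gamma> \<le> g_obj lam X y b \<gamma>'"
  unfolding g_obj_def diff_diff_eq2 using assms
  by (intro penalized_least_squares_min_ex1 inj_Xtail convex_on_cmul convex_on_l1norm)
    (auto simp: l1norm_nonneg)

lemma beta_hat_eq_iff:
  assumes "inj ((*v) X)" "lam > 0"
  shows "beta_hat lam X y = \<beta> \<longleftrightarrow> (\<forall>\<beta>'. f_obj lam X y \<beta> \<le> f_obj lam X y \<beta>')"
  using the1_equality[OF f_obj_min_ex1[OF assms]] theI'[OF f_obj_min_ex1[OF assms]]
  unfolding beta_hat_def by blast

lemma gamma_hat_eq_iff:
  assumes "inj ((*v) X)" "lam > 0"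
  shows "gamma_hat lam X y b = \<gamma> \<longleftrightarrow> (\<forall>\<gamma>'. g_obj lam X y b \<gamma> \<le> g_obj lam X y b \<gamma>')"
  using the1_equality[OF g_obj_min_ex1[OF assms]] theI'[OF g_obj_min_ex1[OF assms]]
  unfolding gamma_hat_def by blast

lemma zero_in_subdiff_iff: "0 \<in> subdiff h x \<longleftrightarrow> (\<forall>z. h x \<le> h z)"
  by (simp add: subdiff_def)

lemma beta_hat_eq_beta_star_iff_head:
  assumes "inj ((*v) X)" "lam > 0"
  shows "beta_hat lam X y = beta_star lam X y b \<longleftrightarrow> head (beta_hat lam X y) = b"
proof
  assume head: "head (beta_hat lam X y) = b"
  define \<gamma> where "\<gamma> = tail (beta_hat lam X y)"
  have "beta_hat lam X y = join b \<gamma>"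
    unfolding \<gamma>_def head[symmetric] by simp
  then have "f_obj lam X y (join b \<gamma>) \<le> f_obj lam X y (join b \<gamma>')" for \<gamma>'
    using beta_hat_eq_iff[OF assms, of y "join b \<gamma>"] by simp
  then have "gamma_hat lam X y b = \<gamma>"
    unfolding gamma_hat_eq_iff[OF assms] f_obj_join_eq_g_obj by simp
  with \<open>beta_hat lam X y = join b \<gamma>\<close> show "beta_hat lam X y = beta_star lam X y b"
    by (simp add: beta_star_def)
qed (simp add: beta_star_def)

lemma beta_hat_eq_beta_star_iff_blockwise_min:
  fixes X :: "real ^ ('k::finite + 'm::finite) ^ 'n::finite"
  assumes "inj ((*v) X)" "lam > 0"
  shows "beta_hat lam X y = beta_star lam X y b
    \<longleftrightarrow> (\<forall>b'. f_obj lam X y (beta_star lam X y b)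
                \<le> f_obj lam X y (join b' (tail (beta_star lam X y b))))"
proof
  assume "beta_hat lam X y = beta_star lam X y b"
  then show "\<forall>b'. f_obj lam X y (beta_star lam X y b)
      \<le> f_obj lam X y (join b' (tail (beta_star lam X y b)))"
    using beta_hat_eq_iff[OF assms, of y "beta_star lam X y b"] by simp
next
  define \<gamma> where "\<gamma> = gamma_hat lam X y b"
  assume "\<forall>b'. f_obj lam X y (beta_star lam X y b)
    \<le> f_obj lam X y (join b' (tail (beta_star lam X y b)))"
  then have min1: "f_obj lam X y (join b \<gamma>) \<le> f_obj lam X y (join b' \<gamma>)" for b'
    by (simp add: beta_star_def \<gamma>_def)
  have min2: "f_obj lam X y (join b \<gamma>) \<le> f_obj lam X y (join b \<gamma>')" for \<gamma>'
    using gamma_hat_eq_iff[OF assms, of y b \<gamma>] by (simp add: \<gamma>_def f_obj_join_eq_g_obj)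
  have "f_obj lam X y (join b \<gamma>) \<le> f_obj lam X y (join u w)" for u w
    unfolding f_obj_join
  proof (rule penalized_least_squares_blockwise_min_imp_min[where A = "(*v) (Xhead X)"
        and B = "(*v) (Xtail X)" and g = "\<lambda>b. lam * norm b" and h = "\<lambda>\<gamma>. lam * l1norm \<gamma>"])
    show "convex_on UNIV (\<lambda>b. lam * norm b)" "convex_on UNIV (\<lambda>\<gamma>. lam * l1norm \<gamma>)"
      using assms(2) by (simp_all add: convex_on_cmul convex_on_norm convex_on_l1norm)
  qed (use min1 min2 in \<open>simp_all add: f_obj_join\<close>)
  then have "f_obj lam X y (join b \<gamma>) \<le> f_obj lam X y \<beta>" for \<beta>
    using join_head_tail[of \<beta>] by metis
  then show "beta_hat lam X y = beta_star lam X y b"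
    unfolding beta_hat_eq_iff[OF assms] by (simp add: beta_star_def \<gamma>_def)
qed

theorem lemmaC9:
  fixes X :: "real ^ ('k::finite + 'm::finite) ^ 'n::finite"
    and y :: "real ^ 'n" and lam :: real and b :: "real ^ 'k"
  assumes "rank X = CARD('k + 'm)"
    and "lam > 0"
  shows "(0 \<in> subdiff (\<lambda>b'. f_obj lam X y (join b' (tail (beta_star lam X y b))))
                 (head (beta_star lam X y b))
          \<longleftrightarrow> beta_hat lam X y = beta_star lam X y b)
       \<and> (beta_hat lam X y = beta_star lam X y b \<longleftrightarrow> head (beta_hat lam X y) = b)"
proof -
  have inj: "inj ((*v) X)"
    using assms(1) full_rank_injective by blast
  have "0 \<in> subdiff (\<lambda>b'. f_obj lam X y (join b' (tail (beta_star lam X y b))))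
                 (head (beta_star lam X y b))
      \<longleftrightarrow> (\<forall>b'. f_obj lam X y (beta_star lam X y b)
                 \<le> f_obj lam X y (join b' (tail (beta_star lam X y b))))"
    unfolding zero_in_subdiff_iff by (simp add: beta_star_def)
  then show ?thesis
    using beta_hat_eq_beta_star_iff_blockwise_min[OF inj assms(2)]
      beta_hat_eq_beta_star_iff_head[OF inj assms(2)] by blast
qed

end
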